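(* Let $n\geq 3$, $d\geq 2$ and $T\geq 1$ be integers, and let $\Phi_T:\mathbb{R}^{d\times n}\to\mathbb{R}^m$ be a 1-WL geometric model (as defined in the context) in which all the functions $\phi_t,\psi_t$ and $\mathrm{ReadOut}$ are upper Lipschitz. Then $\Phi_T$ is not lower Lipschitz with respect to $d_{\mathcal{G}_{\pm}}$; that is, there is no $c>0$ such that $c\, d_{\mathcal{G}_{\pm}}({X},{Y})\leq\|\Phi_T({X})-\Phi_T({Y})\|_2$ for all ${X},{Y}\in\mathbb{R}^{d\times n}$.
   Context: A point set is ${X}\in\mathbb{R}^{d\times n}$ with columns $x_1,\dots,x_n\in\mathbb{R}^d$. A 1-WL geometric model with $T$ iterations is defined as follows: set $c_i^0=0$ for all $i\in[n]$, and for $t=0,\dots,T-1$, $$c_i^{t+1}=\phi_t\Big(c_i^t,\ \psi_t\big(\{\!\{(c_i^t,c_j^t,\|x_i-x_j\|_2)\mid j\in[n]\}\!\}\big)\Big),$$ and finally $\Phi_T({X})=\mathrm{ReadOut}(\{\!\{c_1^T,\dots,c_n^T\}\!\})$. Here $\phi_t$ are functions between Euclidean spaces, and $\psi_t$, $\mathrm{ReadOut}$ are multiset functions, i.e. functions of a matrix whose columns are the multiset elements, invariant to permuting these columns; Lipschitzness of a multiset function means Lipschitzness of this matrix function in the Euclidean sense. The Procrustes Matching metric is $$d_{\mathcal{G}_{\pm}}({X},{Y})=\Big[\min_{(\pi,R,t)\in S_n\times O(d)\times\mathbb{R}^d}\sum_{j=1}^n\|x_j-Ry_{\pi(j)}+t\|_2^2\Big]^{1/2}.$$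 *)

theory Defs
  imports "HOL-Analysis.Analysis"
begin

text \<open>Vectors of R^a are represented as real lists of length a; a matrix whose
  n columns lie in R^a is a function from the (finite) column index type to such lists.\<close>

definition ldist :: "real list \<Rightarrow> real list \<Rightarrow> real" where
  "ldist u v = sqrt (sum_list (map (\<lambda>(a, b). (a - b)\<^sup>2) (zip u v)))"

definition mat_dist :: "('n::finite \<Rightarrow> real list) \<Rightarrow> ('n \<Rightarrow> real list) \<Rightarrow> real" where
  "mat_dist M N = sqrt (\<Sum>j\<in>UNIV. sum_list (map (\<lambda>(a, b). (a - b)\<^sup>2) (zip (M j) (N j))))"

definition euclid_map :: "nat \<Rightarrow> nat \<Rightarrow> (real list \<Rightarrow> real list) \<Rightarrow> bool" where
  "euclid_map a b f \<longleftrightarrow> (\<forall>v. length v = a \<longrightarrow> length (f v) = b)"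

definition lipschitz_vec :: "nat \<Rightarrow> (real list \<Rightarrow> real list) \<Rightarrow> bool" where
  "lipschitz_vec a f \<longleftrightarrow> (\<exists>L. \<forall>u v. length u = a \<longrightarrow> length v = a \<longrightarrow>
      ldist (f u) (f v) \<le> L * ldist u v)"

text \<open>multiset function: maps R^{a x n} -> R^b and is invariant under column permutations\<close>
definition multiset_map :: "nat \<Rightarrow> nat \<Rightarrow> (('n::finite \<Rightarrow> real list) \<Rightarrow> real list) \<Rightarrow> bool" where
  "multiset_map a b f \<longleftrightarrow> (\<forall>M. (\<forall>j. length (M j) = a) \<longrightarrow>
      length (f M) = b \<and> (\<forall>\<sigma>. \<sigma> permutes (UNIV :: 'n set) \<longrightarrow> f (M \<circ> \<sigma>) = f M))"

definition lipschitz_mset :: "nat \<Rightarrow> (('n::finite \<Rightarrow> real list) \<Rightarrow> real list) \<Rightarrow> bool" where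
  "lipschitz_mset a f \<longleftrightarrow> (\<exists>L. \<forall>M N. (\<forall>j. length (M j) = a) \<longrightarrow> (\<forall>j. length (N j) = a) \<longrightarrow>
      ldist (f M) (f N) \<le> L * mat_dist M N)"

text \<open>Colours c_i^t of the 1-WL geometric model; the point set X is a d x n matrix with
  columns x_i = column i X; c^0 = 0 in R^{k0}.\<close>
primrec wl_colors ::
  "(nat \<Rightarrow> real list \<Rightarrow> real list) \<Rightarrow> (nat \<Rightarrow> ('n::finite \<Rightarrow> real list) \<Rightarrow> real list)
   \<Rightarrow> nat \<Rightarrow> real^'n^'d \<Rightarrow> nat \<Rightarrow> 'n \<Rightarrow> real list" where
  "wl_colors \<phi> \<psi> k0 X 0 i = replicate k0 0"
| "wl_colors \<phi> \<psi> k0 X (Suc t) i =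
     \<phi> t (wl_colors \<phi> \<psi> k0 X t i @
           \<psi> t (\<lambda>j. wl_colors \<phi> \<psi> k0 X t i @ wl_colors \<phi> \<psi> k0 X t j
                      @ [norm (column i X - column j X)]))"

definition wl_model ::
  "(nat \<Rightarrow> real list \<Rightarrow> real list) \<Rightarrow> (nat \<Rightarrow> ('n::finite \<Rightarrow> real list) \<Rightarrow> real list)
   \<Rightarrow> (('n \<Rightarrow> real list) \<Rightarrow> real list) \<Rightarrow> nat \<Rightarrow> nat \<Rightarrow> real^'n^'d \<Rightarrow> real list" where
  "wl_model \<phi> \<psi> readout k0 T X = readout (\<lambda>i. wl_colors \<phi> \<psi> k0 X T i)"

text \<open>Procrustes matching metric (the minimum is attained; we write it as an infimum)\<close>
definition procrustes_dist :: "real^'n::finite^'d::finite \<Rightarrow> real^'n^'d \<Rightarrow> real" where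
  "procrustes_dist X Y = sqrt (Inf {(\<Sum>j\<in>UNIV. (norm (column j X - R *v column (\<pi> j) Y + t))\<^sup>2) | \<pi> R t.
       \<pi> permutes (UNIV :: 'n set) \<and> orthogonal_matrix (R :: real^'d^'d)})"

end

theory Submission
  imports Defs
begin

text \<open>Each colour, and hence the model, is a Lipschitz function of the pairwise distances
  \<open>\<parallel>x\<^sub>i - x\<^sub>j\<parallel>\<close>. Let \<open>Y\<close> be the collinear configuration with one point at \<open>e\<^sub>1\<close>, one at
  \<open>0\<close> and all others at \<open>-e\<^sub>1\<close>, and let \<open>X\<^sub>\<epsilon>\<close> be \<open>Y\<close> with the point at \<open>0\<close> lifted to \<open>\<epsilon> e\<^sub>2\<close>.
  The lift changes every pairwise distance by at most \<open>sqrt (1 + \<epsilon>\<^sup>2) - 1 \<le> \<epsilon>\<^sup>2\<close>, so the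
  outputs on \<open>X\<^sub>\<epsilon>\<close> and \<open>Y\<close> differ by \<open>O(\<epsilon>\<^sup>2)\<close>. On the other hand every linear image of
  \<open>Y\<close>, in particular every rigid motion, is still collinear, whereas three of the points of
  \<open>X\<^sub>\<epsilon>\<close> form a triangle of height \<open>\<epsilon>\<close>; projecting onto the normal of the line shows that
  the Procrustes distance is at least \<open>\<epsilon>/4\<close>. Letting \<open>\<epsilon> \<rightarrow> 0\<close> rules out a lower Lipschitz
  bound.\<close>

lemma sum_list_squared_diffs_nonneg: "0 \<le> sum_list (map (\<lambda>(a, b). (a - b :: real)\<^sup>2) (zip u v))"
  by (rule sum_list_nonneg) auto

lemma ldist_nonneg: "0 \<le> ldist u v"
  by (simp add: ldist_def sum_list_squared_diffs_nonneg)

lemma ldist_squared: "(ldist u v)\<^sup>2 = sum_list (map (\<lambda>(a, b). (a - b)\<^sup>2) (zip u v))"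
  by (simp add: ldist_def sum_list_squared_diffs_nonneg)

lemma ldist_self [simp]: "ldist u u = 0"
  unfolding ldist_def by (induction u) auto

lemma ldist_singleton [simp]: "ldist [x] [y] = \<bar>x - y\<bar>"
  by (simp add: ldist_def)

lemma ldist_append:
  assumes "length a = length c"
  shows "ldist (a @ b) (c @ d) = sqrt ((ldist a c)\<^sup>2 + (ldist b d)\<^sup>2)"
  using assms by (simp add: ldist_squared) (simp add: ldist_def zip_append)

lemma ldist_append_le:
  assumes "length a = length c"
  shows "ldist (a @ b) (c @ d) \<le> ldist a c + ldist b d"
  using sqrt_sum_squares_le_sum_abs[of "ldist a c" "ldist b d"]
  by (simp add: ldist_append[OF assms] ldist_nonneg)

lemma mat_dist_eq_L2_set: "mat_dist M N = L2_set (\<lambda>j. ldist (M j) (N j)) UNIV"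
  by (simp add: mat_dist_def L2_set_def ldist_squared)

lemma mat_dist_le_sum_ldist: "mat_dist M N \<le> (\<Sum>j\<in>UNIV. ldist (M j) (N j))"
  unfolding mat_dist_eq_L2_set by (rule L2_set_le_sum) (simp add: ldist_nonneg)

lemma lipschitz_vecE:
  assumes "lipschitz_vec a f"
  obtains L where "0 \<le> L"
    "\<And>u v. length u = a \<Longrightarrow> length v = a \<Longrightarrow> ldist (f u) (f v) \<le> L * ldist u v"
proof -
  obtain L where L: "\<forall>u v. length u = a \<longrightarrow> length v = a \<longrightarrow> ldist (f u) (f v) \<le> L * ldist u v"
    using assms unfolding lipschitz_vec_def by blast
  show thesis
  proof (rule that[of "max L 0"])
    fix u v :: "real list"
    assume "length u = a" "length v = a"
    with L have "ldist (f u) (f v) \<le> L * ldist u v" by blast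
    also have "\<dots> \<le> max L 0 * ldist u v" by (simp add: mult_right_mono ldist_nonneg)
    finally show "ldist (f u) (f v) \<le> max L 0 * ldist u v" .
  qed simp
qed

lemma lipschitz_msetE:
  assumes "lipschitz_mset a f"
  obtains L where "0 \<le> L"
    "\<And>M N. (\<forall>j. length (M j) = a) \<Longrightarrow> (\<forall>j. length (N j) = a) \<Longrightarrow>
       ldist (f M) (f N) \<le> L * mat_dist M N"
proof -
  obtain L where L: "\<forall>M N. (\<forall>j. length (M j) = a) \<longrightarrow> (\<forall>j. length (N j) = a) \<longrightarrow>
      ldist (f M) (f N) \<le> L * mat_dist M N"
    using assms unfolding lipschitz_mset_def by blast
  show thesis
  proof (rule that[of "max L 0"])
    fix M N :: "'a \<Rightarrow> real list"
    assume "\<forall>j. length (M j) = a" "\<forall>j. length (N j) = a"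
    with L have "ldist (f M) (f N) \<le> L * mat_dist M N" by blast
    also have "\<dots> \<le> max L 0 * mat_dist M N" by (simp add: mult_right_mono mat_dist_eq_L2_set)
    finally show "ldist (f M) (f N) \<le> max L 0 * mat_dist M N" .
  qed simp
qed

definition distance_discrepancy :: "real^'n::finite^'d::finite \<Rightarrow> real^'n^'d \<Rightarrow> real" where
  "distance_discrepancy X Y =
     (\<Sum>i\<in>UNIV. \<Sum>j\<in>UNIV. \<bar>norm (column i X - column j X) - norm (column i Y - column j Y)\<bar>)"

lemma distance_discrepancy_row_le:
  "(\<Sum>j\<in>UNIV. \<bar>norm (column i X - column j X) - norm (column i Y - column j Y)\<bar>)
     \<le> distance_discrepancy X Y"
  unfolding distance_discrepancy_def by (rule member_le_sum) (auto intro: sum_nonneg)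

lemma mat_dist_wl_messages_le:
  fixes cX cY :: "'n::finite \<Rightarrow> real list" and X Y :: "real^'n^'d::finite"
  assumes "\<And>j. length (cX j) = length (cY j)" and "\<And>j. ldist (cX j) (cY j) \<le> \<delta>"
  shows "mat_dist (\<lambda>j. cX i @ cX j @ [norm (column i X - column j X)])
                  (\<lambda>j. cY i @ cY j @ [norm (column i Y - column j Y)])
           \<le> 2 * real CARD('n) * \<delta> + distance_discrepancy X Y"
proof -
  let ?dX = "\<lambda>j. norm (column i X - column j X)" and ?dY = "\<lambda>j. norm (column i Y - column j Y)"
  have "ldist (cX i @ cX j @ [?dX j]) (cY i @ cY j @ [?dY j]) \<le> 2 * \<delta> + \<bar>?dX j - ?dY j\<bar>" for j
  proof -
    have "ldist (cX i @ cX j @ [?dX j]) (cY i @ cY j @ [?dY j])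
        \<le> ldist (cX i) (cY i) + (ldist (cX j) (cY j) + ldist [?dX j] [?dY j])"
      using assms(1) by (meson add_left_mono ldist_append_le order_trans)
    then show ?thesis using assms(2)[of i] assms(2)[of j] by simp
  qed
  then have "mat_dist (\<lambda>j. cX i @ cX j @ [?dX j]) (\<lambda>j. cY i @ cY j @ [?dY j])
      \<le> (\<Sum>j\<in>UNIV. 2 * \<delta> + \<bar>?dX j - ?dY j\<bar>)"
    by (intro order_trans[OF mat_dist_le_sum_ldist sum_mono])
  also have "\<dots> \<le> 2 * real CARD('n) * \<delta> + distance_discrepancy X Y"
    using distance_discrepancy_row_le[of i X Y] by (simp add: sum.distrib)
  finally show ?thesis .
qed

lemma wl_colors_length:
  fixes \<phi> :: "nat \<Rightarrow> real list \<Rightarrow> real list"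
    and \<psi> :: "nat \<Rightarrow> ('n::finite \<Rightarrow> real list) \<Rightarrow> real list"
  assumes "\<forall>t<T. multiset_map (2 * k t + 1) (p t) (\<psi> t)"
    and "\<forall>t<T. euclid_map (k t + p t) (k (Suc t)) (\<phi> t)"
    and "t \<le> T"
  shows "length (wl_colors \<phi> \<psi> (k 0) (X :: real^'n^'d::finite) t i) = k t"
  using assms(3)
proof (induction t arbitrary: i)
  case 0
  then show ?case by simp
next
  case (Suc t)
  then have "t < T" and IH: "\<And>j. length (wl_colors \<phi> \<psi> (k 0) X t j) = k t" by simp_all
  with assms(1) have "length (\<psi> t (\<lambda>j. wl_colors \<phi> \<psi> (k 0) X t i @ wl_colors \<phi> \<psi> (k 0) X t j
                      @ [norm (column i X - column j X)])) = p t"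
    unfolding multiset_map_def by auto
  with assms(2) \<open>t < T\<close> IH show ?case unfolding euclid_map_def by simp
qed

lemma wl_colors_lipschitz_discrepancy:
  fixes \<phi> :: "nat \<Rightarrow> real list \<Rightarrow> real list"
    and \<psi> :: "nat \<Rightarrow> ('n::finite \<Rightarrow> real list) \<Rightarrow> real list"
  assumes \<psi>: "\<forall>t<T. multiset_map (2 * k t + 1) (p t) (\<psi> t) \<and> lipschitz_mset (2 * k t + 1) (\<psi> t)"
    and \<phi>: "\<forall>t<T. euclid_map (k t + p t) (k (Suc t)) (\<phi> t) \<and> lipschitz_vec (k t + p t) (\<phi> t)"
    and "t \<le> T"
  shows "\<exists>C\<ge>0. \<forall>(X :: real^'n^'d::finite) Y i.
     ldist (wl_colors \<phi> \<psi> (k 0) X t i) (wl_colors \<phi> \<psi> (k 0) Y t i) \<le> C * distance_discrepancy X Y"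
  using assms(3)
proof (induction t)
  case 0
  show ?case by auto
next
  case (Suc t)
  then have "t < T" by simp
  obtain C where "0 \<le> C" and C: "\<And>(X :: real^'n^'d) Y i.
      ldist (wl_colors \<phi> \<psi> (k 0) X t i) (wl_colors \<phi> \<psi> (k 0) Y t i) \<le> C * distance_discrepancy X Y"
    using Suc.IH \<open>t < T\<close> by force
  have len: "length (wl_colors \<phi> \<psi> (k 0) X t j) = k t" for X :: "real^'n^'d" and j
    by (rule wl_colors_length[where T = T]) (use \<psi> \<phi> \<open>t < T\<close> in auto)
  obtain L\<psi> where "0 \<le> L\<psi>" and L\<psi>: "\<And>M N. (\<forall>j. length (M j) = 2 * k t + 1) \<Longrightarrow>
      (\<forall>j. length (N j) = 2 * k t + 1) \<Longrightarrow> ldist (\<psi> t M) (\<psi> t N) \<le> L\<psi> * mat_dist M N"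
    using \<psi> \<open>t < T\<close> lipschitz_msetE by metis
  obtain L\<phi> where "0 \<le> L\<phi>" and L\<phi>: "\<And>u v. length u = k t + p t \<Longrightarrow> length v = k t + p t \<Longrightarrow>
      ldist (\<phi> t u) (\<phi> t v) \<le> L\<phi> * ldist u v"
    using \<phi> \<open>t < T\<close> lipschitz_vecE by metis
  show ?case
  proof (intro exI[of _ "L\<phi> * (C + L\<psi> * (2 * real CARD('n) * C + 1))"] conjI allI)
    show "0 \<le> L\<phi> * (C + L\<psi> * (2 * real CARD('n) * C + 1))"
      using \<open>0 \<le> C\<close> \<open>0 \<le> L\<psi>\<close> \<open>0 \<le> L\<phi>\<close> by simp
    fix X Y :: "real^'n^'d" and i
    define cX where "cX = wl_colors \<phi> \<psi> (k 0) X t"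
    define cY where "cY = wl_colors \<phi> \<psi> (k 0) Y t"
    define MX where "MX = (\<lambda>j. cX i @ cX j @ [norm (column i X - column j X)])"
    define MY where "MY = (\<lambda>j. cY i @ cY j @ [norm (column i Y - column j Y)])"
    let ?D = "distance_discrepancy X Y"
    have lenM: "\<forall>j. length (MX j) = 2 * k t + 1" "\<forall>j. length (MY j) = 2 * k t + 1"
      by (simp_all add: MX_def MY_def cX_def cY_def len)
    then have "length (\<psi> t MX) = p t" "length (\<psi> t MY) = p t"
      using \<psi> \<open>t < T\<close> unfolding multiset_map_def by auto
    then have "ldist (\<phi> t (cX i @ \<psi> t MX)) (\<phi> t (cY i @ \<psi> t MY))
        \<le> L\<phi> * ldist (cX i @ \<psi> t MX) (cY i @ \<psi> t MY)"
      by (intro L\<phi>) (simp_all add: cX_def cY_def len)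
    also have "\<dots> \<le> L\<phi> * (ldist (cX i) (cY i) + ldist (\<psi> t MX) (\<psi> t MY))"
      using \<open>0 \<le> L\<phi>\<close> by (intro mult_left_mono ldist_append_le) (simp_all add: cX_def cY_def len)
    also have "\<dots> \<le> L\<phi> * (C * ?D + L\<psi> * mat_dist MX MY)"
      using \<open>0 \<le> L\<phi>\<close> C[where X=X and Y=Y and i=i] L\<psi>[OF lenM] by (intro mult_left_mono add_mono) (simp_all add: cX_def cY_def)
    also have "\<dots> \<le> L\<phi> * (C * ?D + L\<psi> * (2 * real CARD('n) * (C * ?D) + ?D))"
      unfolding MX_def MY_def using \<open>0 \<le> L\<phi>\<close> \<open>0 \<le> L\<psi>\<close> C
      by (intro mult_left_mono add_left_mono mat_dist_wl_messages_le) (simp_all add: cX_def cY_def len)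
    finally show "ldist (wl_colors \<phi> \<psi> (k 0) X (Suc t) i) (wl_colors \<phi> \<psi> (k 0) Y (Suc t) i)
        \<le> L\<phi> * (C + L\<psi> * (2 * real CARD('n) * C + 1)) * ?D"
      by (simp add: cX_def cY_def MX_def MY_def algebra_simps)
  qed
qed

lemma wl_model_lipschitz_discrepancy:
  fixes \<phi> :: "nat \<Rightarrow> real list \<Rightarrow> real list"
    and \<psi> :: "nat \<Rightarrow> ('n::finite \<Rightarrow> real list) \<Rightarrow> real list"
    and readout :: "('n \<Rightarrow> real list) \<Rightarrow> real list"
  assumes \<psi>: "\<forall>t<T. multiset_map (2 * k t + 1) (p t) (\<psi> t) \<and> lipschitz_mset (2 * k t + 1) (\<psi> t)"
    and \<phi>: "\<forall>t<T. euclid_map (k t + p t) (k (Suc t)) (\<phi> t) \<and> lipschitz_vec (k t + p t) (\<phi> t)"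
    and "lipschitz_mset (k T) readout"
  obtains K where "0 \<le> K" and "\<And>X Y :: real^'n^'d::finite.
    ldist (wl_model \<phi> \<psi> readout (k 0) T X) (wl_model \<phi> \<psi> readout (k 0) T Y)
      \<le> K * distance_discrepancy X Y"
proof -
  obtain C where "0 \<le> C" and C: "\<And>(X :: real^'n^'d) Y i.
      ldist (wl_colors \<phi> \<psi> (k 0) X T i) (wl_colors \<phi> \<psi> (k 0) Y T i) \<le> C * distance_discrepancy X Y"
    using wl_colors_lipschitz_discrepancy[OF \<psi> \<phi>, of T] by auto
  obtain L where "0 \<le> L" and L: "\<And>M N. (\<forall>j. length (M j) = k T) \<Longrightarrow> (\<forall>j. length (N j) = k T) \<Longrightarrow>
      ldist (readout M) (readout N) \<le> L * mat_dist M N"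
    using assms(3) lipschitz_msetE by metis
  have len: "length (wl_colors \<phi> \<psi> (k 0) X T j) = k T" for X :: "real^'n^'d" and j
    by (rule wl_colors_length[where T = T]) (use \<psi> \<phi> in auto)
  show thesis
  proof (rule that[of "L * (real CARD('n) * C)"])
    show "0 \<le> L * (real CARD('n) * C)" using \<open>0 \<le> L\<close> \<open>0 \<le> C\<close> by simp
    fix X Y :: "real^'n^'d"
    have "ldist (wl_model \<phi> \<psi> readout (k 0) T X) (wl_model \<phi> \<psi> readout (k 0) T Y)
        \<le> L * mat_dist (wl_colors \<phi> \<psi> (k 0) X T) (wl_colors \<phi> \<psi> (k 0) Y T)"
      unfolding wl_model_def by (intro L) (simp_all add: len)
    also have "\<dots> \<le> L * (\<Sum>i\<in>UNIV. ldist (wl_colors \<phi> \<psi> (k 0) X T i) (wl_colors \<phi> \<psi> (k 0) Y T i))"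
      using \<open>0 \<le> L\<close> by (intro mult_left_mono mat_dist_le_sum_ldist)
    also have "\<dots> \<le> L * (\<Sum>i\<in>(UNIV :: 'n set). C * distance_discrepancy X Y)"
      using \<open>0 \<le> L\<close> C by (intro mult_left_mono sum_mono)
    finally show "ldist (wl_model \<phi> \<psi> readout (k 0) T X) (wl_model \<phi> \<psi> readout (k 0) T Y)
        \<le> L * (real CARD('n) * C) * distance_discrepancy X Y"
      by simp
  qed
qed

definition line_coord :: "'n \<Rightarrow> 'n \<Rightarrow> 'n \<Rightarrow> real" where
  "line_coord b c j = (if j = b then 1 else if j = c then 0 else -1)"

definition lifted_point :: "'d::finite \<Rightarrow> 'd \<Rightarrow> 'n \<Rightarrow> 'n \<Rightarrow> real \<Rightarrow> 'n \<Rightarrow> real^'d" where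
  "lifted_point d1 d2 b c e j = line_coord b c j *\<^sub>R axis d1 1 + (if j = c then e else 0) *\<^sub>R axis d2 1"

definition lifted_line :: "'d::finite \<Rightarrow> 'd \<Rightarrow> 'n::finite \<Rightarrow> 'n \<Rightarrow> real \<Rightarrow> real^'n^'d" where
  "lifted_line d1 d2 b c e = (\<chi> i j. lifted_point d1 d2 b c e j $ i)"

lemma column_lifted_line [simp]: "column j (lifted_line d1 d2 b c e) = lifted_point d1 d2 b c e j"
  by (simp add: lifted_line_def column_def vec_eq_iff)

lemma norm_axis_combination:
  assumes "d1 \<noteq> d2"
  shows "norm (x *\<^sub>R axis d1 (1::real) + y *\<^sub>R axis d2 1) = sqrt (x\<^sup>2 + y\<^sup>2)"
  using assms
  by (simp add: norm_eq_sqrt_inner inner_add_left inner_add_right inner_axis_axis power2_eq_square)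

lemma sqrt_one_plus_square_le: "sqrt (1 + e\<^sup>2) - 1 \<le> e\<^sup>2"
proof -
  have "sqrt (1 + e\<^sup>2) \<le> sqrt ((1 + e\<^sup>2)\<^sup>2)"
    by (intro real_sqrt_le_mono self_le_power) simp_all
  then show ?thesis by simp
qed

lemma distance_discrepancy_lifted_line_le:
  fixes b c :: "'n::finite" and d1 d2 :: "'d::finite"
  assumes "d1 \<noteq> d2" and "b \<noteq> c"
  shows "distance_discrepancy (lifted_line d1 d2 b c e) (lifted_line d1 d2 b c 0)
           \<le> real CARD('n) * real CARD('n) * e\<^sup>2"
proof -
  have "\<bar>norm (lifted_point d1 d2 b c e i - lifted_point d1 d2 b c e j)
          - norm (lifted_point d1 d2 b c 0 i - lifted_point d1 d2 b c 0 j)\<bar> \<le> e\<^sup>2" for i j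
  proof -
    have diff: "lifted_point d1 d2 b c e i - lifted_point d1 d2 b c e j
        = (line_coord b c i - line_coord b c j) *\<^sub>R axis d1 1
          + ((if i = c then e else 0) - (if j = c then e else 0)) *\<^sub>R axis d2 1" for e
      by (simp add: lifted_point_def algebra_simps)
    consider "i = c \<longleftrightarrow> j = c" | "(i = c) \<noteq> (j = c)" by blast
    then show ?thesis
    proof cases
      case 1
      then show ?thesis by (simp add: diff)
    next
      case 2
      then have "\<bar>line_coord b c i - line_coord b c j\<bar> = 1" "(line_coord b c i - line_coord b c j)\<^sup>2 = 1"
        using assms(2) by (auto simp: line_coord_def)
      with 2 have "\<bar>norm (lifted_point d1 d2 b c e i - lifted_point d1 d2 b c e j)
          - norm (lifted_point d1 d2 b c 0 i - lifted_point d1 d2 b c 0 j)\<bar> = sqrt (1 + e\<^sup>2) - 1"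
        unfolding diff using assms(1) by (auto simp: norm_axis_combination power2_commute)
      then show ?thesis using sqrt_one_plus_square_le by simp
    qed
  qed
  then have "distance_discrepancy (lifted_line d1 d2 b c e) (lifted_line d1 d2 b c 0)
      \<le> (\<Sum>i\<in>(UNIV :: 'n set). \<Sum>j\<in>(UNIV :: 'n set). e\<^sup>2)"
    unfolding distance_discrepancy_def by (intro sum_mono) simp
  then show ?thesis by simp
qed

lemma inner_diff_le_near_line:
  fixes x :: "'i \<Rightarrow> 'a::real_inner"
  assumes "inner v u = 0" and near: "\<And>j. norm (x j - \<beta> j *\<^sub>R u + t) \<le> s"
  shows "\<bar>inner v (x i - x j)\<bar> \<le> 2 * norm v * s"
proof -
  let ?w = "\<lambda>j. x j - \<beta> j *\<^sub>R u + t"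
  have "inner v (x i - x j) = inner v (?w i - ?w j)"
    using assms(1) by (simp add: inner_diff_right inner_add_right algebra_simps)
  also have "\<bar>\<dots>\<bar> \<le> norm v * norm (?w i - ?w j)"
    by (rule Cauchy_Schwarz_ineq2)
  also have "\<dots> \<le> norm v * (s + s)"
    using near[of i] near[of j] norm_triangle_ineq4[of "?w i" "?w j"]
    by (intro mult_left_mono) simp_all
  finally show ?thesis by simp
qed

lemma square_le_of_projection_bounds:
  fixes u1 u2 e r s :: real
  assumes r: "r\<^sup>2 = u1\<^sup>2 + u2\<^sup>2" "0 < r"
    and u2: "\<bar>u2\<bar> \<le> r * s" and u2_u1: "\<bar>u2 - e * u1\<bar> \<le> 2 * r * s" and "\<bar>e\<bar> \<le> 1"
  shows "e\<^sup>2 \<le> 10 * s\<^sup>2"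
proof -
  have "\<bar>e * u1\<bar> \<le> 3 * (r * s)" using u2 u2_u1 by linarith
  then have "(e * u1)\<^sup>2 \<le> (3 * (r * s))\<^sup>2" by (metis abs_ge_zero order_trans power2_abs power_mono)
  moreover have "(e * u2)\<^sup>2 \<le> (r * s)\<^sup>2"
  proof -
    have "\<bar>e * u2\<bar> \<le> r * s" using u2 \<open>\<bar>e\<bar> \<le> 1\<close> mult_left_le_one_le[of "\<bar>u2\<bar>" "\<bar>e\<bar>"] by (simp add: abs_mult)
    then show ?thesis by (metis abs_ge_zero order_trans power2_abs power_mono)
  qed
  ultimately have "r\<^sup>2 * e\<^sup>2 \<le> r\<^sup>2 * (10 * s\<^sup>2)"
    by (simp add: r(1) power_mult_distrib algebra_simps)
  then show ?thesis using \<open>0 < r\<close> by simp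
qed

lemma lifted_line_far_from_collinear:
  fixes a b c :: "'n::finite" and d1 d2 :: "'d::finite"
  assumes "d1 \<noteq> d2" "a \<noteq> b" "a \<noteq> c" "b \<noteq> c" "0 < e" "e \<le> 1"
  shows "e\<^sup>2 / 10 \<le> (\<Sum>j\<in>UNIV. (norm (lifted_point d1 d2 b c e j - \<beta> j *\<^sub>R u + t))\<^sup>2)"
    (is "_ \<le> ?S")
proof -
  let ?x = "lifted_point d1 d2 b c e"
  define s where "s = sqrt ?S"
  have "0 \<le> ?S" by (intro sum_nonneg) simp
  then have "s\<^sup>2 = ?S" "0 \<le> s" by (simp_all add: s_def)
  have near: "norm (?x j - \<beta> j *\<^sub>R u + t) \<le> s" for j
    unfolding s_def by (intro real_le_rsqrt member_le_sum) simp_all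
  note projection_bound = inner_diff_le_near_line[where x = ?x, OF _ near]
  have xb: "?x b - ?x a = 2 *\<^sub>R axis d1 1" and xc: "?x c - ?x a = axis d1 1 + e *\<^sub>R axis d2 1"
    using assms(2-4) by (auto simp: lifted_point_def line_coord_def algebra_simps scaleR_2)
  have "e\<^sup>2 \<le> 10 * s\<^sup>2"
  proof (cases "u $ d1 = 0 \<and> u $ d2 = 0")
    case True
    then have "inner (axis d2 1) u = 0" by (simp add: inner_axis')
    from projection_bound[OF this, of c a] have "e \<le> 2 * s"
      using assms(1,5) by (simp add: xc inner_add_right inner_axis_axis)
    then have "e\<^sup>2 \<le> (2 * s)\<^sup>2" using assms(5) by (intro power_mono) simp_all
    then have "e\<^sup>2 \<le> 4 * s\<^sup>2" by (simp add: power_mult_distrib)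
    then show ?thesis using zero_le_power2[of s] by linarith
  next
    case False
    define v where "v = (u $ d2) *\<^sub>R axis d1 (1::real) + (- u $ d1) *\<^sub>R axis d2 1"
    have "inner v u = 0" by (simp add: v_def inner_diff_left inner_axis')
    note projection_bound_v = projection_bound[OF this]
    have v_axis: "inner v (axis d1 1) = u $ d2" "inner v (axis d2 1) = - u $ d1"
      using assms(1) by (simp_all add: v_def inner_diff_left inner_axis_axis)
    have "norm v = sqrt ((u $ d1)\<^sup>2 + (u $ d2)\<^sup>2)"
      unfolding v_def norm_axis_combination[OF assms(1)] by (simp add: add.commute)
    then have r: "(norm v)\<^sup>2 = (u $ d1)\<^sup>2 + (u $ d2)\<^sup>2" "0 < norm v"
      using False by (simp_all add: sum_power2_gt_zero_iff)
    show ?thesis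
    proof (rule square_le_of_projection_bounds[OF r])
      show "\<bar>u $ d2\<bar> \<le> norm v * s"
        using projection_bound_v[of b a] by (simp add: xb v_axis abs_mult)
      show "\<bar>u $ d2 - e * u $ d1\<bar> \<le> 2 * norm v * s"
        using projection_bound_v[of c a] by (simp add: xc v_axis inner_add_right)
    qed (use assms(5,6) in simp)
  qed
  then show ?thesis using \<open>s\<^sup>2 = ?S\<close> by simp
qed

lemma procrustes_dist_lifted_line_ge:
  fixes a b c :: "'n::finite" and d1 d2 :: "'d::finite"
  assumes "d1 \<noteq> d2" "a \<noteq> b" "a \<noteq> c" "b \<noteq> c" "0 < e" "e \<le> 1"
  shows "e / 4 \<le> procrustes_dist (lifted_line d1 d2 b c e) (lifted_line d1 d2 b c 0)"
proof -
  let ?A = "{(\<Sum>j\<in>UNIV. (norm (column j (lifted_line d1 d2 b c e)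
                 - R *v column (\<pi> j) (lifted_line d1 d2 b c 0) + t))\<^sup>2) | \<pi> R t.
       \<pi> permutes (UNIV :: 'n set) \<and> orthogonal_matrix (R :: real^'d^'d)}"
  have "R *v column j (lifted_line d1 d2 b c 0) = line_coord b c j *\<^sub>R (R *v axis d1 1)"
    for R :: "real^'d^'d" and j
    by (simp add: lifted_point_def matrix_vector_mult_scaleR)
  then have "e\<^sup>2 / 10 \<le> x" if "x \<in> ?A" for x
    using that lifted_line_far_from_collinear[OF assms] by auto
  moreover have "?A \<noteq> {}"
    using permutes_id orthogonal_matrix_id by blast
  ultimately have "e\<^sup>2 / 10 \<le> Inf ?A"
    by (intro cInf_greatest)
  moreover have "(e / 4)\<^sup>2 \<le> e\<^sup>2 / 10"
    by (simp add: power_divide)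
  ultimately have "(e / 4)\<^sup>2 \<le> Inf ?A"
    by linarith
  then show ?thesis unfolding procrustes_dist_def by (rule real_le_rsqrt)
qed

lemma nonpos_if_linear_le_quadratic:
  fixes c K :: real
  assumes "\<And>e. 0 < e \<Longrightarrow> e \<le> 1 \<Longrightarrow> c * e \<le> K * e\<^sup>2"
  shows "c \<le> 0"
proof (rule ccontr)
  assume "\<not> c \<le> 0"
  then have "0 < c" by simp
  define e where "e = min 1 (c / (2 * (\<bar>K\<bar> + 1)))"
  have "0 < e" "e \<le> 1" using \<open>0 < c\<close> by (simp_all add: e_def)
  have "c * e \<le> (\<bar>K\<bar> * e) * e"
    using assms[OF \<open>0 < e\<close> \<open>e \<le> 1\<close>] mult_right_mono[OF abs_ge_self[of K], of "e * e"]
    by (simp add: power2_eq_square mult.assoc)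
  then have "c \<le> \<bar>K\<bar> * e" using \<open>0 < e\<close> by simp
  also have "\<dots> \<le> \<bar>K\<bar> * (c / (2 * (\<bar>K\<bar> + 1)))" unfolding e_def by (intro mult_left_mono) simp_all
  also have "\<dots> < c" using \<open>0 < c\<close> by (simp add: field_simps add_nonneg_pos)
  finally show False by simp
qed

theorem corollary1:
  fixes \<phi> :: "nat \<Rightarrow> real list \<Rightarrow> real list"
    and \<psi> :: "nat \<Rightarrow> ('n::finite \<Rightarrow> real list) \<Rightarrow> real list"
    and readout :: "('n \<Rightarrow> real list) \<Rightarrow> real list"
    and k p :: "nat \<Rightarrow> nat" and m T :: nat
  assumes "CARD('n) \<ge> 3" and "CARD('d::finite) \<ge> 2" and "T \<ge> 1"
    and "\<forall>t<T. multiset_map (2 * k t + 1) (p t) (\<psi> t) \<and> lipschitz_mset (2 * k t + 1) (\<psi> t)"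
    and "\<forall>t<T. euclid_map (k t + p t) (k (Suc t)) (\<phi> t) \<and> lipschitz_vec (k t + p t) (\<phi> t)"
    and "multiset_map (k T) m readout" and "lipschitz_mset (k T) readout"
  shows "\<not> (\<exists>c>0. \<forall>X Y :: real^'n^'d.
            c * procrustes_dist X Y \<le> ldist (wl_model \<phi> \<psi> readout (k 0) T X) (wl_model \<phi> \<psi> readout (k 0) T Y))"
proof
  assume "\<exists>c>0. \<forall>X Y :: real^'n^'d.
            c * procrustes_dist X Y \<le> ldist (wl_model \<phi> \<psi> readout (k 0) T X) (wl_model \<phi> \<psi> readout (k 0) T Y)"
  then obtain c where "c > 0" and lower: "\<And>X Y :: real^'n^'d.
      c * procrustes_dist X Y \<le> ldist (wl_model \<phi> \<psi> readout (k 0) T X) (wl_model \<phi> \<psi> readout (k 0) T Y)"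
    by blast
  obtain K where "0 \<le> K" and upper: "\<And>X Y :: real^'n^'d.
      ldist (wl_model \<phi> \<psi> readout (k 0) T X) (wl_model \<phi> \<psi> readout (k 0) T Y) \<le> K * distance_discrepancy X Y"
    using wl_model_lipschitz_discrepancy[OF assms(4,5,7)] by blast
  obtain S :: "'n set" where "card S = 3"
    using obtain_subset_with_card_n[OF assms(1)] by blast
  then obtain a b c' :: 'n where "a \<noteq> b" "a \<noteq> c'" "b \<noteq> c'"
    unfolding card_3_iff by blast
  obtain D :: "'d set" where "card D = 2"
    using obtain_subset_with_card_n[OF assms(2)] by blast
  then obtain d1 d2 :: 'd where "d1 \<noteq> d2"
    unfolding card_2_iff by blast
  have "c / 4 * e \<le> K * (real CARD('n) * real CARD('n)) * e\<^sup>2" if "0 < e" "e \<le> 1" for e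
  proof -
    let ?X = "lifted_line d1 d2 b c' e" and ?Y = "lifted_line d1 d2 b c' 0"
    have "c / 4 * e \<le> c * procrustes_dist ?X ?Y"
      using procrustes_dist_lifted_line_ge[OF \<open>d1 \<noteq> d2\<close> \<open>a \<noteq> b\<close> \<open>a \<noteq> c'\<close> \<open>b \<noteq> c'\<close> that] \<open>c > 0\<close>
      by simp
    also have "\<dots> \<le> K * distance_discrepancy ?X ?Y"
      using lower upper by (rule order_trans)
    also have "\<dots> \<le> K * (real CARD('n) * real CARD('n) * e\<^sup>2)"
      using distance_discrepancy_lifted_line_le[OF \<open>d1 \<noteq> d2\<close> \<open>b \<noteq> c'\<close>] \<open>0 \<le> K\<close>
      by (rule mult_left_mono)
    finally show ?thesis by (simp add: mult.assoc)
  qed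
  then have "c / 4 \<le> 0" by (rule nonpos_if_linear_le_quadratic)
  with \<open>c > 0\<close> show False by simp
qed

end
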